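(* Let $m\ge2$ and consider a preferential (dynamic) attachment circuit of index $m$. Let $W_n$ and $B_n$ be the numbers of white and blue external nodes after $n$ insertions. For $n\ge1$, $$\mathbb{E}[W_n^2]=\frac{(m+1)^3n^3}{(mn+n-1)(2m+1)^2}+\frac{(8m^2-m-1)(m+1)^2n^2+m(m+1)(3m^2-6m-1)n-m(2m^3+6m^2+3m+1)}{(mn+n-1)(2m+1)^2(3m+1)},$$ $$\mathbb{E}[B_n^2]=\frac{4m^2(m+1)^2}{(3m+1)^2(2m+1)^2}\,n^2+\frac{96m^4+138m^3+83m^2+18m+1}{(5m+1)(4m+1)(3m+1)^2}\cdot\frac{4(m+1)m}{(2m+1)^2}\,n+O(1)\quad(n\to\infty).$$
   Context: Preferential (dynamic) attachment circuit of index $m\ge1$: at time $0$ there is a single node labeled $0$. At each time $n\ge1$ a new node labeled $n$ is added and $m$ parents are chosen for it one at a time, with replacement, among nodes $0,\dots,n-1$. Before the $(i+1)$-th choice ($i=0,\dots,m-1$), each existing node $v$ is chosen with probability $\frac{d_i(v)+1}{\sum_{x}(d_i(x)+1)}$, where $d_i(x)$ is the outdegree of $x$ in the current multigraph including the edges created by the first $i$ choices for node $n$; after each choice an edge from the chosen parent to node $n$ is immediately added (multi-edges allowed, counted with multiplicity). External nodes: a node of outdegree $s$ carries $s+1$ external nodes, colored white if the node has outdegree $0$, blue if outdegree $1$, red if outdegree $\ge2$. Thus $W_n$ equals the number of nodes of outdegree $0$ and $B_n$ equals twice the number of nodes of outdegree $1$. *)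

theory Defs
  imports "HOL-Probability.Probability" "HOL-Library.Landau_Symbols"
begin

text \<open>State of the circuit after n insertions: the list of outdegrees of
nodes 0, ..., n (list index = node label). The attachment probabilities and
the colours of external nodes depend only on the outdegrees.\<close>

definition pa_weights :: "nat list \<Rightarrow> nat multiset" where
  "pa_weights ds = (\<Sum>i<length ds. replicate_mset (ds ! i + 1) i)"

text \<open>One parent choice: node i chosen with probability (d(i)+1)/sum(d(x)+1),
then its outdegree is incremented (edge to the new node added).\<close>
definition pa_choose :: "nat list \<Rightarrow> nat list pmf" where
  "pa_choose ds = map_pmf (\<lambda>i. ds[i := ds ! i + 1]) (pmf_of_multiset (pa_weights ds))"

primrec pa_choices :: "nat \<Rightarrow> nat list \<Rightarrow> nat list pmf" where
  "pa_choices 0 ds = return_pmf ds"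
| "pa_choices (Suc k) ds = bind_pmf (pa_choose ds) (pa_choices k)"

definition pa_insert :: "nat \<Rightarrow> nat list \<Rightarrow> nat list pmf" where
  "pa_insert m ds = map_pmf (\<lambda>ds'. ds' @ [0]) (pa_choices m ds)"

primrec pa_circuit :: "nat \<Rightarrow> nat \<Rightarrow> nat list pmf" where
  "pa_circuit m 0 = return_pmf [0]"
| "pa_circuit m (Suc n) = bind_pmf (pa_circuit m n) (pa_insert m)"

definition white_ext :: "nat list \<Rightarrow> nat" where
  "white_ext ds = length (filter (\<lambda>d. d = 0) ds)"

definition blue_ext :: "nat list \<Rightarrow> nat" where
  "blue_ext ds = 2 * length (filter (\<lambda>d. d = 1) ds)"

end

theory Submission
  imports Defs
begin

(*
  A parent choice raises the total attachment weight T by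
  one and changes the number W of nodes of outdegree 0 and the number Y of nodes of outdegree 1
  to (W - 1, Y + 1) with probability W / T, to (W, Y - 1) with probability 2 Y / T, and leaves
  them unchanged otherwise. For every moment of (W, Y) of order at most two there is a product
  c of shifted factors and a polynomial Q with c (T + k) E[moment after k choices] = Q k W Y T,
  so E[W], E[W^2], E[Y], E[W Y] and E[Y^2] after n insertions satisfy exact linear recurrences
  in n. The recurrences for E[W] and E[W^2] are solved in closed form. For the other three,
  polynomial ansatzes in X = (m + 1) n satisfy the recurrences up to a defect of lower degree in
  X; the error e (scaled by X - 1 for E[Y]) then obeys e (n + 1) = rho n * e n + r n with
  0 <= rho n <= X / (X + c) for a constant c > 0 and r n = O(1 / X), which keeps it bounded.
*)

section \<open>Finite expectations and contracting recurrences\<close>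

lemma length_filter_list_update:
  "i < length xs \<Longrightarrow> length (filter P (xs[i := x])) + (if P (xs ! i) then 1 else 0)
     = length (filter P xs) + (if P x then 1 else 0)"
proof (induction xs arbitrary: i)
  case (Cons a xs)
  then show ?case by (cases i) auto
qed simp

lemma expectation_bind_pmf_finite:
  fixes h :: "'b \<Rightarrow> real"
  assumes "finite (set_pmf p)" and "\<And>x. x \<in> set_pmf p \<Longrightarrow> finite (set_pmf (f x))"
  shows "measure_pmf.expectation (bind_pmf p f) h =
    measure_pmf.expectation p (\<lambda>x. measure_pmf.expectation (f x) h)"
  using pmf_expectation_bind[of "set_pmf p" f p h] assms
  by (simp add: integral_measure_pmf[of "set_pmf p"])

lemma expectation_cong_pmf:
  "(\<And>x. x \<in> set_pmf p \<Longrightarrow> f x = g x) \<Longrightarrow>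
   measure_pmf.expectation p (f :: 'a \<Rightarrow> real) = measure_pmf.expectation p g"
  by (rule integral_cong_AE) (auto simp: AE_measure_pmf_iff)

lemma bounded_of_contracting_recurrence:
  fixes e \<rho> r x :: "nat \<Rightarrow> real" and c C :: real
  assumes "c > 0"
    and rec: "\<And>n. n \<ge> n0 \<Longrightarrow> e (Suc n) = \<rho> n * e n + r n"
    and contr: "\<And>n. n \<ge> n0 \<Longrightarrow> x n \<ge> 0 \<and> 0 \<le> \<rho> n \<and> \<rho> n \<le> x n / (x n + c)"
    and small: "\<And>n. n \<ge> n0 \<Longrightarrow> \<bar>r n\<bar> \<le> C / (x n + c)"
  shows "\<exists>B. \<forall>n\<ge>n0. \<bar>e n\<bar> \<le> B"
proof -
  define K where "K = \<bar>C\<bar> / c"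
  have remainder: "\<rho> n \<le> 1 \<and> \<bar>r n\<bar> \<le> K * (1 - \<rho> n)" if "n \<ge> n0" for n
  proof -
    have "x n + c > 0"
      using contr[OF that] \<open>c > 0\<close> by linarith
    then have gap: "c / (x n + c) \<le> 1 - \<rho> n"
      using contr[OF that] by (simp add: field_simps)
    have "c / (x n + c) > 0"
      using \<open>c > 0\<close> \<open>x n + c > 0\<close> by simp
    have "\<bar>r n\<bar> \<le> \<bar>C\<bar> / (x n + c)"
      using small[OF that] divide_right_mono[OF abs_ge_self[of C], of "x n + c"] \<open>x n + c > 0\<close>
      by linarith
    also have "\<dots> = K * (c / (x n + c))"
      using \<open>c > 0\<close> by (simp add: K_def)
    also have "\<dots> \<le> K * (1 - \<rho> n)"
      using gap \<open>c > 0\<close> by (intro mult_left_mono) (auto simp: K_def)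
    finally show ?thesis
      using gap \<open>c / (x n + c) > 0\<close> by linarith
  qed
  have "\<bar>e n\<bar> \<le> max \<bar>e n0\<bar> K" if "n \<ge> n0" for n
    using that
  proof (induction n rule: dec_induct)
    case (step n)
    have "\<bar>e (Suc n)\<bar> \<le> \<rho> n * \<bar>e n\<bar> + K * (1 - \<rho> n)"
      using rec[OF step(1)] contr[OF step(1)] remainder[OF step(1)] abs_triangle_ineq[of "\<rho> n * e n" "r n"]
      by (simp add: abs_mult)
    also have "\<dots> \<le> \<rho> n * max \<bar>e n0\<bar> K + max \<bar>e n0\<bar> K * (1 - \<rho> n)"
      using step.IH contr[OF step(1)] remainder[OF step(1)]
      by (intro add_mono mult_left_mono mult_right_mono) auto
    finally show ?case
      by (simp add: algebra_simps)
  qed simp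
  then show ?thesis
    by blast
qed

lemma abs_poly_le_pow:
  fixes c :: "nat \<Rightarrow> real"
  assumes "1 \<le> x"
  shows "\<bar>\<Sum>i\<le>d. c i * x^i\<bar> \<le> (\<Sum>i\<le>d. \<bar>c i\<bar>) * x^d"
proof -
  have "\<bar>\<Sum>i\<le>d. c i * x^i\<bar> \<le> (\<Sum>i\<le>d. \<bar>c i\<bar> * x^i)"
    using assms by (intro order.trans[OF sum_abs]) (simp add: abs_mult)
  also have "\<dots> \<le> (\<Sum>i\<le>d. \<bar>c i\<bar> * x^d)"
    using assms by (intro sum_mono mult_left_mono power_increasing) auto
  finally show ?thesis
    by (simp add: sum_distrib_right)
qed

lemma mult_divide_le_ratio:
  fixes a b X M :: real
  assumes "0 \<le> a" and "a \<le> b" and "b > 0" and "X \<ge> 0" and "X + M > 0"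
  shows "0 \<le> a * X / (b * (X + M)) \<and> a * X / (b * (X + M)) \<le> X / (X + M)"
proof
  have "a * X / (b * (X + M)) = (a / b) * (X / (X + M))"
    by simp
  also have "\<dots> \<le> X / (X + M)"
    using assms by (intro mult_left_le_one_le) auto
  finally show "a * X / (b * (X + M)) \<le> X / (X + M)" .
qed (use assms in simp)

lemma abs_divide_falling3_le:
  fixes X M u C :: real
  assumes "X \<ge> 1" and "M \<ge> 2" and "\<bar>u\<bar> \<le> C * X^2"
  shows "\<bar>u / ((X + M - 2) * (X + M - 1) * (X + M))\<bar> \<le> C / (X + M)"
proof -
  have "0 \<le> C * X^2" "X^2 > 0"
    using order_trans[OF abs_ge_zero assms(3)] assms(1) by simp_all
  then have "C \<ge> 0"
    by (simp add: zero_le_mult_iff)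
  have "X^2 \<le> (X + M - 2) * (X + M - 1)"
    using assms by (simp add: power2_eq_square) (intro mult_mono, auto)
  then have "\<bar>u\<bar> \<le> C * ((X + M - 2) * (X + M - 1))"
    using assms(3) mult_left_mono[OF _ \<open>C \<ge> 0\<close>] by (meson order_trans)
  have pos: "X + M - 2 > 0" "X + M - 1 > 0" "X + M > 0"
    using assms by simp_all
  then have "\<bar>u / ((X + M - 2) * (X + M - 1) * (X + M))\<bar> = \<bar>u\<bar> / ((X + M - 2) * (X + M - 1) * (X + M))"
    by (simp add: abs_divide)
  also have "\<dots> \<le> C * ((X + M - 2) * (X + M - 1)) / ((X + M - 2) * (X + M - 1) * (X + M))"
    using \<open>\<bar>u\<bar> \<le> C * ((X + M - 2) * (X + M - 1))\<close> pos by (intro divide_right_mono) auto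
  also have "\<dots> = C / (X + M)"
    using pos by (simp add: divide_simps)
  finally show ?thesis .
qed

lemma abs_divide_falling4_le:
  fixes X M u C :: real
  assumes "X \<ge> 3" and "M \<ge> 2" and "\<bar>u\<bar> \<le> C * X^3"
  shows "\<bar>u / (2 * ((X + M - 3) * (X + M - 2) * (X + M - 1) * (X + M)))\<bar> \<le> C / (X + M)"
proof -
  have "0 \<le> C * X^3" "X^3 > 0"
    using order_trans[OF abs_ge_zero assms(3)] assms(1) by simp_all
  then have "C \<ge> 0"
    by (simp add: zero_le_mult_iff)
  have "3 * 3 \<le> X * X"
    using assms by (intro mult_mono) auto
  then have "X * 2 \<le> X * (X * X)"
    using assms by (intro mult_left_mono) auto
  then have "X^3 \<le> 2 * ((X - 1) * X * (X + 1))"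
    by (simp add: power3_eq_cube algebra_simps)
  moreover have "(X - 1) * X * (X + 1) \<le> (X + M - 3) * (X + M - 2) * (X + M - 1)"
    using assms by (intro mult_mono mult_nonneg_nonneg) auto
  ultimately have "X^3 \<le> 2 * ((X + M - 3) * (X + M - 2) * (X + M - 1))"
    by linarith
  then have "\<bar>u\<bar> \<le> C * (2 * ((X + M - 3) * (X + M - 2) * (X + M - 1)))"
    using assms(3) mult_left_mono[OF _ \<open>C \<ge> 0\<close>] by (meson order_trans)
  have pos: "X + M - 3 > 0" "X + M - 2 > 0" "X + M - 1 > 0" "X + M > 0"
    using assms by simp_all
  then have "\<bar>u / (2 * ((X + M - 3) * (X + M - 2) * (X + M - 1) * (X + M)))\<bar>
      = \<bar>u\<bar> / (2 * ((X + M - 3) * (X + M - 2) * (X + M - 1) * (X + M)))"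
    by (simp add: abs_divide)
  also have "\<dots> \<le> C * (2 * ((X + M - 3) * (X + M - 2) * (X + M - 1)))
      / (2 * ((X + M - 3) * (X + M - 2) * (X + M - 1) * (X + M)))"
    using \<open>\<bar>u\<bar> \<le> C * (2 * ((X + M - 3) * (X + M - 2) * (X + M - 1)))\<close> pos
    by (intro divide_right_mono) auto
  also have "\<dots> = C / (X + M)"
    using pos by (simp add: divide_simps)
  finally show ?thesis .
qed

section \<open>A single parent choice\<close>

definition outdeg1 :: "nat list \<Rightarrow> nat" where
  "outdeg1 ds = length (filter (\<lambda>d. d = 1) ds)"

definition total_weight :: "nat list \<Rightarrow> nat" where
  "total_weight ds = sum_list ds + length ds"

lemma count_pa_weights:
  "count (pa_weights ds) i = (if i < length ds then ds ! i + 1 else 0)"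
  unfolding pa_weights_def count_sum by (simp only: count_replicate_mset) (simp add: sum.delta')

lemma set_mset_pa_weights: "set_mset (pa_weights ds) = {..<length ds}"
  by (auto simp: count_pa_weights simp flip: count_greater_zero_iff split: if_splits)

lemma size_pa_weights: "size (pa_weights ds) = total_weight ds"
  unfolding pa_weights_def total_weight_def size_multiset_sum size_replicate_mset
  by (simp only: Suc_eq_plus1 sum.distrib) (simp add: sum_list_sum_nth atLeast0LessThan)

lemma pa_weights_eq_empty_iff: "pa_weights ds = {#} \<longleftrightarrow> ds = []"
  using set_mset_pa_weights[of ds] by (metis lessThan_empty_iff length_0_conv set_mset_eq_empty_iff)

lemma set_pmf_pa_choose:
  "ds \<noteq> [] \<Longrightarrow> set_pmf (pa_choose ds) = (\<lambda>i. ds[i := ds ! i + 1]) ` {..<length ds}"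
  by (simp add: pa_choose_def pa_weights_eq_empty_iff set_mset_pa_weights)

lemma expectation_pa_choose:
  assumes "ds \<noteq> []"
  shows "measure_pmf.expectation (pa_choose ds) f =
    (\<Sum>i<length ds. real (ds ! i + 1) * f (ds[i := ds ! i + 1])) / real (total_weight ds)"
proof -
  have "measure_pmf.expectation (pa_choose ds) f =
      (\<Sum>i<length ds. pmf (pmf_of_multiset (pa_weights ds)) i *\<^sub>R f (ds[i := ds ! i + 1]))"
    unfolding pa_choose_def integral_map_pmf using assms
    by (intro integral_measure_pmf) (auto simp: pa_weights_eq_empty_iff set_mset_pa_weights)
  also have "\<dots> = (\<Sum>i<length ds. real (ds ! i + 1) * f (ds[i := ds ! i + 1]) / real (total_weight ds))"
    using assms by (intro sum.cong) (simp_all add: pa_weights_eq_empty_iff count_pa_weights size_pa_weights)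
  finally show ?thesis
    by (simp add: sum_divide_distrib)
qed

lemma white_ext_list_update:
  "i < length ds \<Longrightarrow>
   real (white_ext (ds[i := Suc (ds ! i)])) = real (white_ext ds) - (if ds ! i = 0 then 1 else 0)"
  using length_filter_list_update[of i ds "\<lambda>d. d = 0" "ds ! i + 1"]
  unfolding white_ext_def by (auto split: if_splits)

lemma outdeg1_list_update:
  "i < length ds \<Longrightarrow> real (outdeg1 (ds[i := Suc (ds ! i)]))
     = real (outdeg1 ds) + (if ds ! i = 0 then 1 else 0) - (if ds ! i = 1 then 1 else 0)"
  using length_filter_list_update[of i ds "\<lambda>d. d = 1" "ds ! i + 1"]
  unfolding outdeg1_def by (auto split: if_splits)

lemma total_weight_list_update:
  "i < length ds \<Longrightarrow> total_weight (ds[i := Suc (ds ! i)]) = Suc (total_weight ds)"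
  using elem_le_sum_list[of i ds] by (simp add: total_weight_def sum_list_update)

lemma sum_list_by_outdegree:
  assumes "\<And>d. d \<ge> 2 \<Longrightarrow> G d = G 2"
  shows "(\<Sum>d\<leftarrow>ds. real (d + 1) * G d) =
    real (white_ext ds) * G 0 + 2 * real (outdeg1 ds) * G 1
    + (real (total_weight ds) - real (white_ext ds) - 2 * real (outdeg1 ds)) * G 2"
proof (induction ds)
  case (Cons d ds)
  consider "d = 0" | "d = 1" | "d \<ge> 2" by linarith
  then show ?case
  proof cases
    case 3
    then show ?thesis
      using Cons assms[OF 3] by (simp add: white_ext_def outdeg1_def total_weight_def algebra_simps)
  qed (use Cons in \<open>simp_all add: white_ext_def outdeg1_def total_weight_def algebra_simps\<close>)
qed (simp add: white_ext_def outdeg1_def total_weight_def)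

lemma expectation_pa_choose_white_outdeg1:
  fixes g :: "real \<Rightarrow> real \<Rightarrow> real"
  assumes "ds \<noteq> []"
  defines "W \<equiv> real (white_ext ds)" and "Y \<equiv> real (outdeg1 ds)" and "T \<equiv> real (total_weight ds)"
  shows "measure_pmf.expectation (pa_choose ds) (\<lambda>x. g (real (white_ext x)) (real (outdeg1 x))) =
    (W * g (W - 1) (Y + 1) + 2 * Y * g W (Y - 1) + (T - W - 2 * Y) * g W Y) / T"
proof -
  define G where "G d = g (W - (if d = 0 then 1 else 0)) (Y + (if d = 0 then 1 else 0) - (if d = 1 then 1 else 0))"
    for d :: nat
  have "(\<Sum>i<length ds. real (ds ! i + 1) * g (real (white_ext (ds[i := ds ! i + 1])))
          (real (outdeg1 (ds[i := ds ! i + 1]))))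
      = (\<Sum>i<length ds. real (ds ! i + 1) * G (ds ! i))"
    by (intro sum.cong) (simp_all add: white_ext_list_update outdeg1_list_update G_def W_def Y_def)
  also have "\<dots> = (\<Sum>d\<leftarrow>ds. real (d + 1) * G d)"
    by (simp add: sum_list_sum_nth atLeast0LessThan)
  also have "\<dots> = W * G 0 + 2 * Y * G 1 + (T - W - 2 * Y) * G 2"
    unfolding W_def Y_def T_def by (rule sum_list_by_outdegree) (simp add: G_def)
  finally show ?thesis
    using assms(1) by (simp add: expectation_pa_choose T_def G_def)
qed

lemma pa_choose_support:
  "ds \<noteq> [] \<Longrightarrow> x \<in> set_pmf (pa_choose ds) \<Longrightarrow>
   length x = length ds \<and> total_weight x = total_weight ds + 1"
  by (auto simp: set_pmf_pa_choose total_weight_list_update)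

lemma pa_choices_support:
  "ds \<noteq> [] \<Longrightarrow> x \<in> set_pmf (pa_choices k ds) \<Longrightarrow>
   length x = length ds \<and> total_weight x = total_weight ds + k"
proof (induction k arbitrary: ds)
  case (Suc k)
  then obtain y where y: "y \<in> set_pmf (pa_choose ds)" and x: "x \<in> set_pmf (pa_choices k y)"
    by (auto simp: set_bind_pmf)
  have "length y = length ds" and "total_weight y = total_weight ds + 1"
    using pa_choose_support[OF Suc.prems(1) y] by auto
  moreover from this Suc.prems(1) have "y \<noteq> []"
    by auto
  ultimately show ?case
    using Suc.IH[OF _ x] by simp
qed simp

lemma finite_set_pmf_pa_choices: "ds \<noteq> [] \<Longrightarrow> finite (set_pmf (pa_choices k ds))"
proof (induction k arbitrary: ds)
  case (Suc k)
  have "finite (set_pmf (pa_choose ds))"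
    using Suc.prems by (simp add: set_pmf_pa_choose)
  moreover have "finite (set_pmf (pa_choices k y))" if "y \<in> set_pmf (pa_choose ds)" for y
  proof (rule Suc.IH)
    show "y \<noteq> []"
      using pa_choose_support[OF Suc.prems that] Suc.prems by auto
  qed
  ultimately show ?case
    unfolding pa_choices.simps set_bind_pmf by (rule finite_UN_I)
qed simp

section \<open>Moments after k parent choices\<close>

lemma expectation_pa_choices_invariant:
  fixes c :: "real \<Rightarrow> real" and Q :: "real \<Rightarrow> real \<Rightarrow> real \<Rightarrow> real \<Rightarrow> real"
    and \<mu> :: "nat list \<Rightarrow> real"
  assumes init: "\<And>ds. c (real (total_weight ds)) * \<mu> ds =
      Q 0 (real (white_ext ds)) (real (outdeg1 ds)) (real (total_weight ds))"
    and step: "\<And>K W Y T. W * Q K (W - 1) (Y + 1) (T + 1) + 2 * Y * Q K W (Y - 1) (T + 1)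
      + (T - W - 2 * Y) * Q K W Y (T + 1) = T * Q (K + 1) W Y T"
    and "ds \<noteq> []"
  shows "c (real (total_weight ds) + real k) * measure_pmf.expectation (pa_choices k ds) \<mu> =
    Q (real k) (real (white_ext ds)) (real (outdeg1 ds)) (real (total_weight ds))"
  using \<open>ds \<noteq> []\<close>
proof (induction k arbitrary: ds)
  case 0
  then show ?case using init by simp
next
  case (Suc k)
  define W Y T where "W = real (white_ext ds)" and "Y = real (outdeg1 ds)"
    and "T = real (total_weight ds)"
  have "T > 0"
    using Suc.prems by (cases ds) (auto simp: T_def total_weight_def)
  have successors: "x \<noteq> [] \<and> real (total_weight x) = T + 1" if "x \<in> set_pmf (pa_choose ds)" for x
    using pa_choose_support[OF Suc.prems that] Suc.prems by (auto simp: T_def)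
  have "measure_pmf.expectation (pa_choices (Suc k) ds) \<mu> =
      measure_pmf.expectation (pa_choose ds) (\<lambda>x. measure_pmf.expectation (pa_choices k x) \<mu>)"
    unfolding pa_choices.simps using Suc.prems successors
    by (intro expectation_bind_pmf_finite) (auto simp: set_pmf_pa_choose finite_set_pmf_pa_choices)
  then have "c (T + real (Suc k)) * measure_pmf.expectation (pa_choices (Suc k) ds) \<mu> =
      measure_pmf.expectation (pa_choose ds)
        (\<lambda>x. c (T + real (Suc k)) * measure_pmf.expectation (pa_choices k x) \<mu>)"
    by simp
  also have "\<dots> = measure_pmf.expectation (pa_choose ds)
      (\<lambda>x. Q (real k) (real (white_ext x)) (real (outdeg1 x)) (T + 1))"
  proof (rule expectation_cong_pmf)
    fix x assume "x \<in> set_pmf (pa_choose ds)"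
    then show "c (T + real (Suc k)) * measure_pmf.expectation (pa_choices k x) \<mu> =
        Q (real k) (real (white_ext x)) (real (outdeg1 x)) (T + 1)"
      using Suc.IH[of x] successors[of x] by (simp add: add_ac)
  qed
  also have "\<dots> = (W * Q (real k) (W - 1) (Y + 1) (T + 1) + 2 * Y * Q (real k) W (Y - 1) (T + 1)
      + (T - W - 2 * Y) * Q (real k) W Y (T + 1)) / T"
    unfolding W_def Y_def T_def by (rule expectation_pa_choose_white_outdeg1[OF Suc.prems])
  also have "\<dots> = Q (real (Suc k)) W Y T"
    using \<open>T > 0\<close> by (simp only: step) (simp add: add.commute)
  finally show ?case by (simp add: W_def Y_def T_def)
qed

lemma expectation_pa_choices_white:
  fixes k :: nat
  assumes "ds \<noteq> []"
  defines "W \<equiv> real (white_ext ds)" and "T \<equiv> real (total_weight ds)" and "K \<equiv> real k"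
  shows "(T + K - 1) * measure_pmf.expectation (pa_choices k ds) (\<lambda>x. real (white_ext x)) = W * (T - 1)"
  unfolding W_def T_def K_def
  by (rule expectation_pa_choices_invariant[where c = "\<lambda>S. S - 1" and Q = "\<lambda>K W Y T. W * (T - 1)"])
    (auto simp: assms algebra_simps)

lemma expectation_pa_choices_white_sq:
  fixes k :: nat
  assumes "ds \<noteq> []"
  defines "W \<equiv> real (white_ext ds)" and "T \<equiv> real (total_weight ds)" and "K \<equiv> real k"
  shows "(T + K - 2) * (T + K - 1) * measure_pmf.expectation (pa_choices k ds) (\<lambda>x. real (white_ext x)^2)
    = (T - 1) * (W^2 * (T - 2) + K * W)"
  unfolding W_def T_def K_def
  by (rule expectation_pa_choices_invariant[where c = "\<lambda>S. (S - 2) * (S - 1)"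
        and Q = "\<lambda>K W Y T. (T - 1) * (W^2 * (T - 2) + K * W)"])
    (auto simp: assms algebra_simps power2_eq_square)

lemma expectation_pa_choices_outdeg1:
  fixes k :: nat
  assumes "ds \<noteq> []"
  defines "W \<equiv> real (white_ext ds)" and "Y \<equiv> real (outdeg1 ds)" and "T \<equiv> real (total_weight ds)"
    and "K \<equiv> real k"
  shows "(T + K - 2) * (T + K - 1) * measure_pmf.expectation (pa_choices k ds) (\<lambda>x. real (outdeg1 x))
    = (T - 1) * (Y * (T - 2) + K * W)"
  unfolding W_def Y_def T_def K_def
  by (rule expectation_pa_choices_invariant[where c = "\<lambda>S. (S - 2) * (S - 1)"
        and Q = "\<lambda>K W Y T. (T - 1) * (Y * (T - 2) + K * W)"])
    (auto simp: assms algebra_simps)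

lemma expectation_pa_choices_white_outdeg1:
  fixes k :: nat
  assumes "ds \<noteq> []"
  defines "W \<equiv> real (white_ext ds)" and "Y \<equiv> real (outdeg1 ds)" and "T \<equiv> real (total_weight ds)"
    and "K \<equiv> real k"
  shows "(T + K - 3) * (T + K - 2) * (T + K - 1)
      * measure_pmf.expectation (pa_choices k ds) (\<lambda>x. real (white_ext x) * real (outdeg1 x))
    = (T - 2) * (T - 1) * W * (Y * (T - 3) + K * (W - 1))"
  unfolding W_def Y_def T_def K_def
  by (rule expectation_pa_choices_invariant[where c = "\<lambda>S. (S - 3) * (S - 2) * (S - 1)"
        and Q = "\<lambda>K W Y T. (T - 2) * (T - 1) * W * (Y * (T - 3) + K * (W - 1))"])
    (auto simp: assms algebra_simps)

lemma expectation_pa_choices_outdeg1_sq: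
  fixes k :: nat
  assumes "ds \<noteq> []"
  defines "W \<equiv> real (white_ext ds)" and "Y \<equiv> real (outdeg1 ds)" and "T \<equiv> real (total_weight ds)"
    and "K \<equiv> real k"
  shows "(T + K - 4) * (T + K - 3) * (T + K - 2) * (T + K - 1)
     * measure_pmf.expectation (pa_choices k ds) (\<lambda>x. 2 * real (outdeg1 x)^2)
   = 2 * (T - 4) * (T - 3) * (T - 2) * (T - 1) * Y^2 + 4 * K * (T - 3) * (T - 2) * (T - 1) * (W * Y)
     + 2 * K * (K - 1) * (T - 2) * (T - 1) * W^2
     + K * (T - 1) * (2 * (T - 3) * (T - 2) + (2 * T - 7) * (K - 1) + (K - 1) * (2 * K - 1)) * W
     + 2 * K * (T - 2) * (T - 1) * (2 * (T - 3) + K - 1) * Y"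
  unfolding W_def Y_def T_def K_def
  by (rule expectation_pa_choices_invariant[where c = "\<lambda>S. (S - 4) * (S - 3) * (S - 2) * (S - 1)"
        and Q = "\<lambda>K W Y T. 2 * (T - 4) * (T - 3) * (T - 2) * (T - 1) * Y^2
          + 4 * K * (T - 3) * (T - 2) * (T - 1) * (W * Y) + 2 * K * (K - 1) * (T - 2) * (T - 1) * W^2
          + K * (T - 1) * (2 * (T - 3) * (T - 2) + (2 * T - 7) * (K - 1) + (K - 1) * (2 * K - 1)) * W
          + 2 * K * (T - 2) * (T - 1) * (2 * (T - 3) + K - 1) * Y"])
    (auto simp: assms algebra_simps power2_eq_square)

section \<open>Moments after one insertion\<close>

lemma expectation_pa_insert:
  fixes h :: "nat list \<Rightarrow> real"
  shows "measure_pmf.expectation (pa_insert m ds) h =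
    measure_pmf.expectation (pa_choices m ds) (\<lambda>x. h (x @ [0]))"
  by (simp add: pa_insert_def)

lemma white_ext_append_0 [simp]: "white_ext (ds @ [0]) = Suc (white_ext ds)"
  by (simp add: white_ext_def)

lemma outdeg1_append_0 [simp]: "outdeg1 (ds @ [0]) = outdeg1 ds"
  by (simp add: outdeg1_def)

lemma total_weight_append_0 [simp]: "total_weight (ds @ [0]) = Suc (total_weight ds)"
  by (simp add: total_weight_def)

lemma total_weight_ge_1: "ds \<noteq> [] \<Longrightarrow> total_weight ds \<ge> 1"
  by (cases ds) (auto simp: total_weight_def)

lemma expectation_pa_insert_white:
  assumes "ds \<noteq> []" and "m \<ge> 2"
  defines "W \<equiv> real (white_ext ds)" and "T \<equiv> real (total_weight ds)"
  shows "measure_pmf.expectation (pa_insert m ds) (\<lambda>x. real (white_ext x)) =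
    W * (T - 1) / (T + real m - 1) + 1"
proof -
  have "T + real m - 1 > 0"
    using total_weight_ge_1[OF assms(1)] assms(2) by (simp add: T_def)
  moreover note expectation_pa_choices_white[OF assms(1), of m]
  ultimately show ?thesis
    using finite_set_pmf_pa_choices[OF assms(1), of m]
    by (simp add: expectation_pa_insert integrable_measure_pmf_finite W_def T_def field_simps)
qed

lemma expectation_pa_insert_white_sq:
  assumes "ds \<noteq> []" and "m \<ge> 2"
  defines "W \<equiv> real (white_ext ds)" and "T \<equiv> real (total_weight ds)"
  shows "measure_pmf.expectation (pa_insert m ds) (\<lambda>x. real (white_ext x)^2) =
    (T - 1) * (W^2 * (T - 2) + real m * W) / ((T + real m - 2) * (T + real m - 1))
    + 2 * (W * (T - 1) / (T + real m - 1)) + 1"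
proof -
  have "T + real m - 2 > 0" "T + real m - 1 > 0"
    using total_weight_ge_1[OF assms(1)] assms(2) by (simp_all add: T_def)
  then have "measure_pmf.expectation (pa_choices m ds) (\<lambda>x. real (white_ext x)) = W * (T - 1) / (T + real m - 1)"
    and "measure_pmf.expectation (pa_choices m ds) (\<lambda>x. real (white_ext x)^2) =
      (T - 1) * (W^2 * (T - 2) + real m * W) / ((T + real m - 2) * (T + real m - 1))"
    using expectation_pa_choices_white[OF assms(1), of m] expectation_pa_choices_white_sq[OF assms(1), of m]
    by (auto simp: W_def T_def intro!: eq_divide_imp simp: ac_simps)
  moreover have "measure_pmf.expectation (pa_insert m ds) (\<lambda>x. real (white_ext x)^2) =
      measure_pmf.expectation (pa_choices m ds) (\<lambda>x. real (white_ext x)^2)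
      + 2 * measure_pmf.expectation (pa_choices m ds) (\<lambda>x. real (white_ext x)) + 1"
    using finite_set_pmf_pa_choices[OF assms(1), of m]
    by (simp add: expectation_pa_insert integrable_measure_pmf_finite power2_eq_square algebra_simps)
  ultimately show ?thesis
    by simp
qed

lemma expectation_pa_insert_outdeg1:
  assumes "ds \<noteq> []" and "m \<ge> 2"
  defines "W \<equiv> real (white_ext ds)" and "Y \<equiv> real (outdeg1 ds)" and "T \<equiv> real (total_weight ds)"
  shows "measure_pmf.expectation (pa_insert m ds) (\<lambda>x. real (outdeg1 x)) =
    (T - 1) * (Y * (T - 2) + real m * W) / ((T + real m - 2) * (T + real m - 1))"
proof -
  have "T + real m - 2 > 0" "T + real m - 1 > 0"
    using total_weight_ge_1[OF assms(1)] assms(2) by (simp_all add: T_def)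
  then show ?thesis
    using expectation_pa_choices_outdeg1[OF assms(1), of m]
    by (auto simp: expectation_pa_insert W_def Y_def T_def intro!: eq_divide_imp simp: ac_simps)
qed

lemma expectation_pa_insert_white_outdeg1:
  assumes "ds \<noteq> []" and "m \<ge> 2" and "total_weight ds \<ge> 2"
  defines "W \<equiv> real (white_ext ds)" and "Y \<equiv> real (outdeg1 ds)" and "T \<equiv> real (total_weight ds)"
  shows "measure_pmf.expectation (pa_insert m ds) (\<lambda>x. real (white_ext x) * real (outdeg1 x)) =
    (T - 2) * (T - 1) * W * (Y * (T - 3) + real m * (W - 1))
      / ((T + real m - 3) * (T + real m - 2) * (T + real m - 1))
    + measure_pmf.expectation (pa_insert m ds) (\<lambda>x. real (outdeg1 x))"
proof -
  have "T + real m - 3 > 0" "T + real m - 2 > 0" "T + real m - 1 > 0"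
    using assms(2,3) by (simp_all add: T_def)
  then have "measure_pmf.expectation (pa_choices m ds) (\<lambda>x. real (white_ext x) * real (outdeg1 x)) =
    (T - 2) * (T - 1) * W * (Y * (T - 3) + real m * (W - 1))
      / ((T + real m - 3) * (T + real m - 2) * (T + real m - 1))"
    using expectation_pa_choices_white_outdeg1[OF assms(1), of m]
    by (auto simp: W_def Y_def T_def intro!: eq_divide_imp simp: ac_simps)
  moreover have "measure_pmf.expectation (pa_insert m ds) (\<lambda>x. real (white_ext x) * real (outdeg1 x)) =
      measure_pmf.expectation (pa_choices m ds) (\<lambda>x. real (white_ext x) * real (outdeg1 x))
      + measure_pmf.expectation (pa_insert m ds) (\<lambda>x. real (outdeg1 x))"
    using finite_set_pmf_pa_choices[OF assms(1), of m]
    by (simp add: expectation_pa_insert integrable_measure_pmf_finite algebra_simps)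
  ultimately show ?thesis
    by simp
qed

lemma expectation_pa_insert_outdeg1_sq:
  assumes "ds \<noteq> []" and "m \<ge> 2" and "total_weight ds \<ge> 3"
  defines "W \<equiv> real (white_ext ds)" and "Y \<equiv> real (outdeg1 ds)" and "T \<equiv> real (total_weight ds)"
    and "M \<equiv> real m"
  shows "measure_pmf.expectation (pa_insert m ds) (\<lambda>x. real (outdeg1 x)^2) =
    (2 * (T - 4) * (T - 3) * (T - 2) * (T - 1) * Y^2 + 4 * M * (T - 3) * (T - 2) * (T - 1) * (W * Y)
     + 2 * M * (M - 1) * (T - 2) * (T - 1) * W^2
     + M * (T - 1) * (2 * (T - 3) * (T - 2) + (2 * T - 7) * (M - 1) + (M - 1) * (2 * M - 1)) * W
     + 2 * M * (T - 2) * (T - 1) * (2 * (T - 3) + M - 1) * Y)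
    / (2 * ((T + M - 4) * (T + M - 3) * (T + M - 2) * (T + M - 1)))"
proof -
  have "T + M - 4 > 0" "T + M - 3 > 0" "T + M - 2 > 0" "T + M - 1 > 0"
    using assms(2,3) by (simp_all add: T_def M_def)
  moreover have "measure_pmf.expectation (pa_choices m ds) (\<lambda>x. 2 * real (outdeg1 x)^2) =
      2 * measure_pmf.expectation (pa_choices m ds) (\<lambda>x. real (outdeg1 x)^2)"
    by simp
  ultimately show ?thesis
    using expectation_pa_choices_outdeg1_sq[OF assms(1), of m]
    by (simp add: expectation_pa_insert, intro eq_divide_imp) (simp_all add: W_def Y_def T_def M_def ac_simps)
qed

section \<open>Recurrences in the number of insertions\<close>

lemma set_pmf_pa_insert: "set_pmf (pa_insert m ds) = (\<lambda>x. x @ [0]) ` set_pmf (pa_choices m ds)"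
  by (simp add: pa_insert_def)

lemma pa_circuit_support:
  "x \<in> set_pmf (pa_circuit m n) \<Longrightarrow> x \<noteq> [] \<and> total_weight x = (m + 1) * n + 1"
proof (induction n arbitrary: x)
  case (Suc n)
  then obtain y z where y: "y \<in> set_pmf (pa_circuit m n)" and z: "z \<in> set_pmf (pa_choices m y)"
    and x: "x = z @ [0]"
    by (auto simp: set_bind_pmf set_pmf_pa_insert)
  have "y \<noteq> []" and "total_weight y = (m + 1) * n + 1"
    using Suc.IH[OF y] by auto
  then have "total_weight z = (m + 1) * Suc n"
    using pa_choices_support[OF _ z] by simp
  then show ?case
    using x by simp
qed (simp add: total_weight_def)

lemma finite_set_pmf_pa_circuit: "finite (set_pmf (pa_circuit m n))"
proof (induction n)
  case (Suc n)
  have "finite (set_pmf (pa_insert m y))" if "y \<in> set_pmf (pa_circuit m n)" for y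
    using pa_circuit_support[OF that] by (simp add: set_pmf_pa_insert finite_set_pmf_pa_choices)
  with Suc show ?case
    unfolding pa_circuit.simps set_bind_pmf by (rule finite_UN_I)
qed simp

lemma expectation_pa_circuit_Suc:
  fixes h :: "nat list \<Rightarrow> real"
  shows "measure_pmf.expectation (pa_circuit m (Suc n)) h =
    measure_pmf.expectation (pa_circuit m n) (\<lambda>ds. measure_pmf.expectation (pa_insert m ds) h)"
  unfolding pa_circuit.simps
proof (rule expectation_bind_pmf_finite)
  fix ds assume "ds \<in> set_pmf (pa_circuit m n)"
  then show "finite (set_pmf (pa_insert m ds))"
    using pa_circuit_support[of ds] by (simp add: set_pmf_pa_insert finite_set_pmf_pa_choices)
qed (rule finite_set_pmf_pa_circuit)

definition pa_scale :: "nat \<Rightarrow> nat \<Rightarrow> real" where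
  "pa_scale m n = (real m + 1) * real n"

lemma pa_circuit_total_weight:
  "ds \<in> set_pmf (pa_circuit m n) \<Longrightarrow> ds \<noteq> [] \<and> real (total_weight ds) = pa_scale m n + 1"
  using pa_circuit_support[of ds m n] by (simp add: pa_scale_def algebra_simps)

lemma pa_scale_Suc: "pa_scale m (Suc n) = pa_scale m n + real m + 1"
  by (simp add: pa_scale_def algebra_simps)

lemma pa_scale_ge: "n \<ge> 1 \<Longrightarrow> pa_scale m n \<ge> real m + 1"
  using mult_left_mono[of 1 "real n" "real m + 1"] by (simp add: pa_scale_def)

definition mean_white :: "nat \<Rightarrow> nat \<Rightarrow> real" where
  "mean_white m n = measure_pmf.expectation (pa_circuit m n) (\<lambda>ds. real (white_ext ds))"

definition mean_white_sq :: "nat \<Rightarrow> nat \<Rightarrow> real" where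
  "mean_white_sq m n = measure_pmf.expectation (pa_circuit m n) (\<lambda>ds. real (white_ext ds)^2)"

definition mean_outdeg1 :: "nat \<Rightarrow> nat \<Rightarrow> real" where
  "mean_outdeg1 m n = measure_pmf.expectation (pa_circuit m n) (\<lambda>ds. real (outdeg1 ds))"

definition mean_white_outdeg1 :: "nat \<Rightarrow> nat \<Rightarrow> real" where
  "mean_white_outdeg1 m n =
    measure_pmf.expectation (pa_circuit m n) (\<lambda>ds. real (white_ext ds) * real (outdeg1 ds))"

definition mean_outdeg1_sq :: "nat \<Rightarrow> nat \<Rightarrow> real" where
  "mean_outdeg1_sq m n = measure_pmf.expectation (pa_circuit m n) (\<lambda>ds. real (outdeg1 ds)^2)"

lemma mean_white_Suc:
  fixes m n :: nat
  assumes "m \<ge> 2"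
  defines "X \<equiv> pa_scale m n" and "M \<equiv> real m"
  shows "mean_white m (Suc n) = X / (X + M) * mean_white m n + 1"
proof -
  have "mean_white m (Suc n) =
      measure_pmf.expectation (pa_circuit m n) (\<lambda>ds. X / (X + M) * real (white_ext ds) + 1)"
    unfolding mean_white_def expectation_pa_circuit_Suc
  proof (rule expectation_cong_pmf)
    fix ds assume "ds \<in> set_pmf (pa_circuit m n)"
    then have "ds \<noteq> []" and T: "real (total_weight ds) = X + 1"
      using pa_circuit_total_weight by (auto simp: X_def)
    show "measure_pmf.expectation (pa_insert m ds) (\<lambda>x. real (white_ext x)) = X / (X + M) * real (white_ext ds) + 1"
      unfolding expectation_pa_insert_white[OF \<open>ds \<noteq> []\<close> assms(1)] T by (simp add: M_def)
  qed
  then show ?thesis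
    using finite_set_pmf_pa_circuit by (simp add: mean_white_def integrable_measure_pmf_finite)
qed

lemma mean_white_sq_Suc:
  fixes m n :: nat
  assumes "m \<ge> 2"
  defines "X \<equiv> pa_scale m n" and "M \<equiv> real m"
  shows "mean_white_sq m (Suc n) = X * (X - 1) / ((X + M - 1) * (X + M)) * mean_white_sq m n
    + (M * X / ((X + M - 1) * (X + M)) + 2 * X / (X + M)) * mean_white m n + 1"
proof -
  have "mean_white_sq m (Suc n) = measure_pmf.expectation (pa_circuit m n)
      (\<lambda>ds. X * (X - 1) / ((X + M - 1) * (X + M)) * real (white_ext ds)^2
        + (M * X / ((X + M - 1) * (X + M)) + 2 * X / (X + M)) * real (white_ext ds) + 1)"
    unfolding mean_white_sq_def expectation_pa_circuit_Suc
  proof (rule expectation_cong_pmf)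
    fix ds assume "ds \<in> set_pmf (pa_circuit m n)"
    then have "ds \<noteq> []" and T: "real (total_weight ds) = X + 1"
      using pa_circuit_total_weight by (auto simp: X_def)
    show "measure_pmf.expectation (pa_insert m ds) (\<lambda>x. real (white_ext x)^2) =
        X * (X - 1) / ((X + M - 1) * (X + M)) * real (white_ext ds)^2
        + (M * X / ((X + M - 1) * (X + M)) + 2 * X / (X + M)) * real (white_ext ds) + 1"
      unfolding expectation_pa_insert_white_sq[OF \<open>ds \<noteq> []\<close> assms(1)] T
      by (simp add: M_def add_divide_distrib ring_distribs mult_ac)
  qed
  then show ?thesis
    using finite_set_pmf_pa_circuit
    by (simp add: mean_white_sq_def mean_white_def integrable_measure_pmf_finite)
qed

lemma mean_outdeg1_Suc:
  fixes m n :: nat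
  assumes "m \<ge> 2"
  defines "X \<equiv> pa_scale m n" and "M \<equiv> real m"
  shows "mean_outdeg1 m (Suc n) = (X - 1) * X / ((X + M - 1) * (X + M)) * mean_outdeg1 m n
    + M * X / ((X + M - 1) * (X + M)) * mean_white m n"
proof -
  have "mean_outdeg1 m (Suc n) = measure_pmf.expectation (pa_circuit m n)
      (\<lambda>ds. (X - 1) * X / ((X + M - 1) * (X + M)) * real (outdeg1 ds)
        + M * X / ((X + M - 1) * (X + M)) * real (white_ext ds))"
    unfolding mean_outdeg1_def expectation_pa_circuit_Suc
  proof (rule expectation_cong_pmf)
    fix ds assume "ds \<in> set_pmf (pa_circuit m n)"
    then have "ds \<noteq> []" and T: "real (total_weight ds) = X + 1"
      using pa_circuit_total_weight by (auto simp: X_def)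
    show "measure_pmf.expectation (pa_insert m ds) (\<lambda>x. real (outdeg1 x)) =
        (X - 1) * X / ((X + M - 1) * (X + M)) * real (outdeg1 ds)
        + M * X / ((X + M - 1) * (X + M)) * real (white_ext ds)"
      unfolding expectation_pa_insert_outdeg1[OF \<open>ds \<noteq> []\<close> assms(1)] T
      by (simp add: M_def add_divide_distrib ring_distribs mult_ac)
  qed
  then show ?thesis
    using finite_set_pmf_pa_circuit
    by (simp add: mean_outdeg1_def mean_white_def integrable_measure_pmf_finite)
qed

lemma mean_white_outdeg1_Suc:
  fixes m n :: nat
  assumes "m \<ge> 2" and "n \<ge> 1"
  defines "X \<equiv> pa_scale m n" and "M \<equiv> real m"
  shows "mean_white_outdeg1 m (Suc n) =
    ((X - 2) * (X - 1) * X * mean_white_outdeg1 m n + M * (X - 1) * X * (mean_white_sq m n - mean_white m n))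
      / ((X + M - 2) * (X + M - 1) * (X + M))
    + mean_outdeg1 m (Suc n)"
proof -
  have "mean_white_outdeg1 m (Suc n) = measure_pmf.expectation (pa_circuit m n)
      (\<lambda>ds. ((X - 2) * (X - 1) * X * (real (white_ext ds) * real (outdeg1 ds))
          + M * (X - 1) * X * (real (white_ext ds)^2 - real (white_ext ds)))
          / ((X + M - 2) * (X + M - 1) * (X + M))
        + measure_pmf.expectation (pa_insert m ds) (\<lambda>x. real (outdeg1 x)))"
    unfolding mean_white_outdeg1_def expectation_pa_circuit_Suc
  proof (rule expectation_cong_pmf)
    fix ds assume "ds \<in> set_pmf (pa_circuit m n)"
    then have "ds \<noteq> []" and T: "real (total_weight ds) = X + 1"
      using pa_circuit_total_weight by (auto simp: X_def)
    moreover have "X \<ge> 1"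
      using pa_scale_ge[OF assms(2), of m] by (simp add: X_def)
    ultimately have "total_weight ds \<ge> 2"
      by linarith
    show "measure_pmf.expectation (pa_insert m ds) (\<lambda>x. real (white_ext x) * real (outdeg1 x)) =
        ((X - 2) * (X - 1) * X * (real (white_ext ds) * real (outdeg1 ds))
          + M * (X - 1) * X * (real (white_ext ds)^2 - real (white_ext ds)))
          / ((X + M - 2) * (X + M - 1) * (X + M))
        + measure_pmf.expectation (pa_insert m ds) (\<lambda>x. real (outdeg1 x))"
      unfolding expectation_pa_insert_white_outdeg1[OF \<open>ds \<noteq> []\<close> assms(1) \<open>total_weight ds \<ge> 2\<close>] T
      by (simp add: M_def algebra_simps power2_eq_square)
  qed
  then show ?thesis
    using finite_set_pmf_pa_circuit
    unfolding mean_outdeg1_def[of m "Suc n"] expectation_pa_circuit_Suc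
    by (simp add: mean_white_outdeg1_def mean_white_sq_def mean_white_def mean_outdeg1_def
        integrable_measure_pmf_finite)
qed

lemma mean_outdeg1_sq_Suc:
  fixes m n :: nat
  assumes "m \<ge> 2" and "n \<ge> 1"
  defines "X \<equiv> pa_scale m n" and "M \<equiv> real m"
  shows "mean_outdeg1_sq m (Suc n) =
    (2 * (X - 3) * (X - 2) * (X - 1) * X * mean_outdeg1_sq m n
     + 4 * M * (X - 2) * (X - 1) * X * mean_white_outdeg1 m n
     + 2 * M * (M - 1) * (X - 1) * X * mean_white_sq m n
     + M * X * (2 * (X - 2) * (X - 1) + (2 * X - 5) * (M - 1) + (M - 1) * (2 * M - 1)) * mean_white m n
     + 2 * M * (X - 1) * X * (2 * (X - 2) + M - 1) * mean_outdeg1 m n)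
    / (2 * ((X + M - 3) * (X + M - 2) * (X + M - 1) * (X + M)))"
proof -
  have "mean_outdeg1_sq m (Suc n) = measure_pmf.expectation (pa_circuit m n)
      (\<lambda>ds. (2 * (X - 3) * (X - 2) * (X - 1) * X * real (outdeg1 ds)^2
        + 4 * M * (X - 2) * (X - 1) * X * (real (white_ext ds) * real (outdeg1 ds))
        + 2 * M * (M - 1) * (X - 1) * X * real (white_ext ds)^2
        + M * X * (2 * (X - 2) * (X - 1) + (2 * X - 5) * (M - 1) + (M - 1) * (2 * M - 1)) * real (white_ext ds)
        + 2 * M * (X - 1) * X * (2 * (X - 2) + M - 1) * real (outdeg1 ds))
       / (2 * ((X + M - 3) * (X + M - 2) * (X + M - 1) * (X + M))))"
    unfolding mean_outdeg1_sq_def expectation_pa_circuit_Suc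
  proof (rule expectation_cong_pmf)
    fix ds assume "ds \<in> set_pmf (pa_circuit m n)"
    then have "ds \<noteq> []" and T: "real (total_weight ds) = X + 1"
      using pa_circuit_total_weight by (auto simp: X_def)
    moreover have "X \<ge> 3"
      using pa_scale_ge[OF assms(2), of m] assms(1) by (simp add: X_def)
    ultimately have "total_weight ds \<ge> 3"
      by linarith
    show "measure_pmf.expectation (pa_insert m ds) (\<lambda>x. real (outdeg1 x)^2) =
      (2 * (X - 3) * (X - 2) * (X - 1) * X * real (outdeg1 ds)^2
        + 4 * M * (X - 2) * (X - 1) * X * (real (white_ext ds) * real (outdeg1 ds))
        + 2 * M * (M - 1) * (X - 1) * X * real (white_ext ds)^2
        + M * X * (2 * (X - 2) * (X - 1) + (2 * X - 5) * (M - 1) + (M - 1) * (2 * M - 1)) * real (white_ext ds)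
        + 2 * M * (X - 1) * X * (2 * (X - 2) + M - 1) * real (outdeg1 ds))
       / (2 * ((X + M - 3) * (X + M - 2) * (X + M - 1) * (X + M)))"
      unfolding expectation_pa_insert_outdeg1_sq[OF \<open>ds \<noteq> []\<close> assms(1) \<open>total_weight ds \<ge> 3\<close>] T
      by (simp add: M_def algebra_simps)
  qed
  then show ?thesis
    using finite_set_pmf_pa_circuit
    by (simp add: mean_outdeg1_sq_def mean_white_outdeg1_def mean_white_sq_def mean_white_def mean_outdeg1_def
        integrable_measure_pmf_finite)
qed

section \<open>The white moments in closed form\<close>

lemma mean_white_eq:
  assumes "m \<ge> 2" and "n \<ge> 1"
  shows "mean_white m n = (pa_scale m n + real m) / (2 * real m + 1)"
  using assms(2)
proof (induction n rule: dec_induct)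
  case base
  show ?case
    using mean_white_Suc[OF assms(1), of 0] by (simp add: pa_scale_def mean_white_def)
next
  case (step n)
  define X M where "X = pa_scale m n" and "M = real m"
  have "X + M > 0" "2 * M + 1 > 0"
    using pa_scale_ge[OF step(1), of m] by (simp_all add: X_def M_def)
  have "mean_white m (Suc n) = X / (X + M) * ((X + M) / (2 * M + 1)) + 1"
    using mean_white_Suc[OF assms(1), of n] step(3) by (simp add: X_def M_def)
  also have "\<dots> = X / (2 * M + 1) + 1"
    using \<open>X + M > 0\<close> by simp
  also have "\<dots> = (X + M + 1 + M) / (2 * M + 1)"
    using \<open>2 * M + 1 > 0\<close> by (simp add: field_simps)
  finally show ?case
    by (simp add: pa_scale_Suc X_def M_def)
qed

definition white_sq_numer :: "real \<Rightarrow> real \<Rightarrow> real" where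
  "white_sq_numer M X = (3 * M + 1) * X^3 + (8 * M^2 - M - 1) * X^2
     + M * (3 * M^2 - 6 * M - 1) * X - M * (2 * M^3 + 6 * M^2 + 3 * M + 1)"

lemma mean_white_sq_eq:
  assumes "m \<ge> 2" and "n \<ge> 1"
  shows "mean_white_sq m n =
    white_sq_numer (real m) (pa_scale m n) / ((2 * real m + 1)^2 * (3 * real m + 1) * (pa_scale m n - 1))"
  using assms(2)
proof (induction n rule: dec_induct)
  case base
  have "white_sq_numer (real m) (real m + 1) = (2 * real m + 1)^2 * (3 * real m + 1) * real m"
    by (simp add: white_sq_numer_def algebra_simps power2_eq_square power3_eq_cube)
  then show ?case
    using mean_white_Suc[OF assms(1), of 0] mean_white_sq_Suc[OF assms(1), of 0] assms(1)
    by (simp add: pa_scale_def mean_white_def mean_white_sq_def)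
next
  case (step n)
  define X M where "X = pa_scale m n" and "M = real m"
  have X: "X \<ge> M + 1" and M: "M \<ge> 2"
    using pa_scale_ge[OF step(1), of m] assms(1) by (simp_all add: X_def M_def)
  have "X - 1 > 0" "X + M - 1 > 0" "X + M > 0" "2 * M + 1 > 0" "3 * M + 1 > 0"
    using X M by auto
  then have "X * (X - 1) / ((X + M - 1) * (X + M))
      * (white_sq_numer M X / ((2 * M + 1)^2 * (3 * M + 1) * (X - 1)))
    + (M * X / ((X + M - 1) * (X + M)) + 2 * X / (X + M)) * ((X + M) / (2 * M + 1)) + 1
    = white_sq_numer M (X + M + 1) / ((2 * M + 1)^2 * (3 * M + 1) * (X + M))"
    by (simp add: divide_simps) (simp add: white_sq_numer_def algebra_simps power2_eq_square power3_eq_cube)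
  then show ?case
    using mean_white_sq_Suc[OF assms(1), of n] mean_white_eq[OF assms(1) step(1)] step(3)
    by (simp add: pa_scale_Suc X_def M_def add_ac)
qed

section \<open>Polynomial approximations of the other moments\<close>

(*
  The coefficients of the approximations are the unique ones for which the defects have degree
  at most 0, 2 and 3 in X respectively.
*)

definition outdeg1_approx :: "real \<Rightarrow> real \<Rightarrow> real" where
  "outdeg1_approx M X = M / ((2 * M + 1) * (3 * M + 1)) * X + (M + 1) / (2 * (2 * M + 1) * (3 * M + 1))"

definition white_outdeg1_approx :: "real \<Rightarrow> real \<Rightarrow> real" where
  "white_outdeg1_approx M X = M / ((2 * M + 1)^2 * (3 * M + 1)) * X^2
    + (1 + 13 * M + 53 * M^2 + 59 * M^3 - 30 * M^4)
      / (2 * (2 * M + 1)^2 * (3 * M + 1)^2 * (4 * M + 1) * (5 * M + 1)) * X"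

definition outdeg1_sq_approx :: "real \<Rightarrow> real \<Rightarrow> real" where
  "outdeg1_sq_approx M X = M^2 / ((2 * M + 1)^2 * (3 * M + 1)^2) * X^2
    + M * (96 * M^4 + 138 * M^3 + 83 * M^2 + 18 * M + 1)
      / ((2 * M + 1)^2 * (3 * M + 1)^2 * (4 * M + 1) * (5 * M + 1)) * X"

definition outdeg1_defect :: "real \<Rightarrow> real \<Rightarrow> real" where
  "outdeg1_defect M X = outdeg1_approx M (X + M + 1) * ((X + M - 1) * (X + M))
    - (X - 1) * X * outdeg1_approx M X - M * X * ((X + M) / (2 * M + 1))"

definition white_outdeg1_defect :: "real \<Rightarrow> real \<Rightarrow> real" where
  "white_outdeg1_defect M X =
    white_outdeg1_approx M (X + M + 1) * ((X + M - 2) * (X + M - 1) * (X + M))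
    - (X - 2) * (X - 1) * X * white_outdeg1_approx M X
    - M * X * (white_sq_numer M X / ((2 * M + 1)^2 * (3 * M + 1)) - (X - 1) * ((X + M) / (2 * M + 1)))
    - outdeg1_approx M (X + M + 1) * ((X + M - 2) * (X + M - 1) * (X + M))"

definition outdeg1_sq_defect :: "real \<Rightarrow> real \<Rightarrow> real" where
  "outdeg1_sq_defect M X =
    outdeg1_sq_approx M (X + M + 1) * (2 * ((X + M - 3) * (X + M - 2) * (X + M - 1) * (X + M)))
    - 2 * (X - 3) * (X - 2) * (X - 1) * X * outdeg1_sq_approx M X
    - 4 * M * (X - 2) * (X - 1) * X * white_outdeg1_approx M X
    - 2 * M * (M - 1) * X * (white_sq_numer M X / ((2 * M + 1)^2 * (3 * M + 1)))
    - M * X * (2 * (X - 2) * (X - 1) + (2 * X - 5) * (M - 1) + (M - 1) * (2 * M - 1)) * ((X + M) / (2 * M + 1))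
    - 2 * M * (X - 1) * X * (2 * (X - 2) + M - 1) * outdeg1_approx M X"

lemma outdeg1_defect_eq:
  assumes "M \<ge> 0"
  shows "outdeg1_defect M X = (M - 1) * M * (M + 1) / (2 * (3 * M + 1))"
proof -
  have "2 * M + 1 > 0" "3 * M + 1 > 0"
    using assms by auto
  then show ?thesis
    unfolding outdeg1_defect_def outdeg1_approx_def
    by (simp add: divide_simps) (simp add: algebra_simps)
qed

lemma white_outdeg1_defect_quadratic:
  assumes "M \<ge> 0"
  shows "\<exists>c2 c1 c0. \<forall>X. white_outdeg1_defect M X = c2 * X^2 + c1 * X + c0"
proof -
  define w v a b p2 p1 where "w = 1 / (2 * M + 1)" and "v = 1 / ((2 * M + 1)^2 * (3 * M + 1))"
    and "a = M / ((2 * M + 1) * (3 * M + 1))" and "b = (M + 1) / (2 * (2 * M + 1) * (3 * M + 1))"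
    and "p2 = M / ((2 * M + 1)^2 * (3 * M + 1))"
    and "p1 = (1 + 13 * M + 53 * M^2 + 59 * M^3 - 30 * M^4)
      / (2 * (2 * M + 1)^2 * (3 * M + 1)^2 * (4 * M + 1) * (5 * M + 1))"
  define k4 k3 k2 k1 k0
    where "k4 = 5 * M * p2 - M * v - 3 * M^2 * v - a + 2 * p2"
    and "k3 = - 4 * M * a + 4 * M * p1 - 4 * M * p2 + M * v + M * w + 10 * M^2 * p2 + M^2 * v - 8 * M^3 * v
      + 2 * a - b + p1 - 5 * p2"
    and "k2 = 6 * M * a - 3 * M * b - 6 * M * p1 - 9 * M * p2 - M * w - 6 * M^2 * a + 6 * M^2 * p1
      - 6 * M^2 * p2 + M^2 * v + M^2 * w + 10 * M^3 * p2 + 6 * M^3 * v - 3 * M^4 * v + a + 3 * b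
      - 3 * p1 + p2"
    and "k1 = 2 * M * a + 6 * M * b - 2 * M * p1 + 2 * M * p2 + 6 * M^2 * a - 3 * M^2 * b - 6 * M^2 * p1
      - 9 * M^2 * p2 + M^2 * v - M^2 * w - 4 * M^3 * a + 4 * M^3 * p1 - 4 * M^3 * p2 + 3 * M^3 * v
      + 5 * M^4 * p2 + 6 * M^4 * v + 2 * M^5 * v - 2 * a - 2 * b + 2 * p1 + 2 * p2"
    and "k0 = - 2 * M * a - 2 * M * b + 2 * M * p1 + 2 * M * p2 + M^2 * a + 3 * M^2 * b - M^2 * p1
      + M^2 * p2 + 2 * M^3 * a - M^3 * b - 2 * M^3 * p1 - 3 * M^3 * p2 - M^4 * a + M^4 * p1
      - M^4 * p2 + M^5 * p2"
  have "2 * M + 1 > 0" "3 * M + 1 > 0" "4 * M + 1 > 0" "5 * M + 1 > 0"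
    using assms by auto
  then have top: "k4 = 0" "k3 = 0"
    unfolding k4_def k3_def w_def v_def a_def b_def p2_def p1_def
    by (simp_all add: divide_simps) (simp_all add: algebra_simps power2_eq_square power3_eq_cube power4_eq_xxxx)
  have "white_outdeg1_defect M X = k4 * X^4 + k3 * X^3 + k2 * X^2 + k1 * X + k0" for X
  proof -
    have "(X + M) / (2 * M + 1) = (X + M) * w"
      and "white_sq_numer M X / ((2 * M + 1)^2 * (3 * M + 1)) = v * white_sq_numer M X"
      and "outdeg1_approx M (X + M + 1) = a * (X + M + 1) + b"
      and "white_outdeg1_approx M X = p2 * X^2 + p1 * X"
      and "white_outdeg1_approx M (X + M + 1) = p2 * (X + M + 1)^2 + p1 * (X + M + 1)"
      by (simp_all add: w_def v_def a_def b_def p2_def p1_def outdeg1_approx_def white_outdeg1_approx_def)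
    note approx = this
    show ?thesis
      unfolding white_outdeg1_defect_def approx k4_def k3_def k2_def k1_def k0_def
      by (simp add: white_sq_numer_def algebra_simps eval_nat_numeral)
  qed
  with top show ?thesis
    by auto
qed

lemma outdeg1_sq_defect_cubic:
  assumes "M \<ge> 0"
  shows "\<exists>c3 c2 c1 c0. \<forall>X. outdeg1_sq_defect M X = c3 * X^3 + c2 * X^2 + c1 * X + c0"
proof -
  define w v a b p2 p1 q2 q1 where "w = 1 / (2 * M + 1)" and "v = 1 / ((2 * M + 1)^2 * (3 * M + 1))"
    and "a = M / ((2 * M + 1) * (3 * M + 1))" and "b = (M + 1) / (2 * (2 * M + 1) * (3 * M + 1))"
    and "p2 = M / ((2 * M + 1)^2 * (3 * M + 1))"
    and "p1 = (1 + 13 * M + 53 * M^2 + 59 * M^3 - 30 * M^4)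
      / (2 * (2 * M + 1)^2 * (3 * M + 1)^2 * (4 * M + 1) * (5 * M + 1))"
    and "q2 = M^2 / ((2 * M + 1)^2 * (3 * M + 1)^2)"
    and "q1 = M * (96 * M^4 + 138 * M^3 + 83 * M^2 + 18 * M + 1)
      / ((2 * M + 1)^2 * (3 * M + 1)^2 * (4 * M + 1) * (5 * M + 1))"
  define k5 k4 k3 k2 k1 k0
    where "k5 = - 4 * M * p2 + 12 * M * q2 + 4 * q2"
    and "k4 = - 4 * M * a - 4 * M * p1 + 12 * M * p2 + 10 * M * q1 - 40 * M * q2 + 2 * M * v - 2 * M * w
      + 30 * M^2 * q2 + 4 * M^2 * v - 6 * M^3 * v + 2 * q1 - 22 * q2"
    and "k3 = 14 * M * a - 4 * M * b + 12 * M * p1 - 8 * M * p2 - 40 * M * q1 - 2 * M * v + 8 * M * w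
      - 2 * M^2 * a + 20 * M^2 * q1 - 80 * M^2 * q2 - 4 * M^2 * w + 40 * M^3 * q2 + 18 * M^3 * v
      - 16 * M^4 * v - 12 * q1 + 32 * q2"
    and "k2 = - 10 * M * a + 14 * M * b - 8 * M * p1 + 30 * M * q1 + 60 * M * q2 - 10 * M * w + 2 * M^2 * a
      - 2 * M^2 * b - 60 * M^2 * q1 - 2 * M^2 * v + 16 * M^2 * w + 20 * M^3 * q1 - 80 * M^3 * q2
      - 10 * M^3 * v - 4 * M^3 * w + 30 * M^4 * q2 + 18 * M^4 * v - 6 * M^5 * v + 22 * q1 - 2 * q2"
    and "k1 = - 10 * M * b + 20 * M * q1 - 4 * M * q2 + 2 * M^2 * b + 30 * M^2 * q1 + 60 * M^2 * q2
      - 2 * M^2 * v - 10 * M^2 * w - 40 * M^3 * q1 - 4 * M^3 * v + 8 * M^3 * w + 10 * M^4 * q1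
      - 40 * M^4 * q2 - 6 * M^4 * v - 2 * M^4 * w + 12 * M^5 * q2 + 8 * M^5 * v + 4 * M^6 * v
      - 12 * q1 - 12 * q2"
    and "k0 = - 12 * M * q1 - 12 * M * q2 + 10 * M^2 * q1 - 2 * M^2 * q2 + 10 * M^3 * q1 + 20 * M^3 * q2
      - 10 * M^4 * q1 + 2 * M^5 * q1 - 8 * M^5 * q2 + 2 * M^6 * q2"
  have "2 * M + 1 > 0" "3 * M + 1 > 0" "4 * M + 1 > 0" "5 * M + 1 > 0"
    using assms by auto
  then have top: "k5 = 0" "k4 = 0"
    unfolding k5_def k4_def w_def v_def a_def b_def p2_def p1_def q2_def q1_def
    by (simp_all add: divide_simps) (simp_all add: algebra_simps power2_eq_square power3_eq_cube power4_eq_xxxx)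
  have "outdeg1_sq_defect M X = k5 * X^5 + k4 * X^4 + k3 * X^3 + k2 * X^2 + k1 * X + k0" for X
  proof -
    have "(X + M) / (2 * M + 1) = (X + M) * w"
      and "white_sq_numer M X / ((2 * M + 1)^2 * (3 * M + 1)) = v * white_sq_numer M X"
      and "outdeg1_approx M X = a * X + b"
      and "white_outdeg1_approx M X = p2 * X^2 + p1 * X"
      and "outdeg1_sq_approx M X = q2 * X^2 + q1 * X"
      and "outdeg1_sq_approx M (X + M + 1) = q2 * (X + M + 1)^2 + q1 * (X + M + 1)"
      by (simp_all add: w_def v_def a_def b_def p2_def p1_def q2_def q1_def
          outdeg1_approx_def white_outdeg1_approx_def outdeg1_sq_approx_def)
    note approx = this
    show ?thesis
      unfolding outdeg1_sq_defect_def approx k5_def k4_def k3_def k2_def k1_def k0_def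
      by (simp add: white_sq_numer_def algebra_simps eval_nat_numeral)
  qed
  with top show ?thesis
    by auto
qed

lemma white_outdeg1_defect_bound:
  assumes "M \<ge> 0"
  shows "\<exists>C. \<forall>X\<ge>1. \<bar>white_outdeg1_defect M X\<bar> \<le> C * X^2"
proof -
  obtain c2 c1 c0 where "\<And>X. white_outdeg1_defect M X = c2 * X^2 + c1 * X + c0"
    using white_outdeg1_defect_quadratic[OF assms] by blast
  then have "\<bar>white_outdeg1_defect M X\<bar> \<le> (\<bar>c0\<bar> + \<bar>c1\<bar> + \<bar>c2\<bar>) * X^2" if "X \<ge> 1" for X
    using abs_poly_le_pow[OF that, of "\<lambda>i. [c0, c1, c2] ! i" 2] by (simp add: numeral_2_eq_2 ac_simps)
  then show ?thesis
    by blast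
qed

lemma outdeg1_sq_defect_bound:
  assumes "M \<ge> 0"
  shows "\<exists>C. \<forall>X\<ge>1. \<bar>outdeg1_sq_defect M X\<bar> \<le> C * X^3"
proof -
  obtain c3 c2 c1 c0 where "\<And>X. outdeg1_sq_defect M X = c3 * X^3 + c2 * X^2 + c1 * X + c0"
    using outdeg1_sq_defect_cubic[OF assms] by blast
  moreover have "(\<Sum>i\<le>3. [c0, c1, c2, c3] ! i * X^i) = c3 * X^3 + c2 * X^2 + c1 * X + c0"
    and "(\<Sum>i\<le>3. \<bar>[c0, c1, c2, c3] ! i\<bar>) = \<bar>c0\<bar> + \<bar>c1\<bar> + \<bar>c2\<bar> + \<bar>c3\<bar>" for X :: real
    by (simp_all add: numeral_3_eq_3 power2_eq_square)
  ultimately have "\<bar>outdeg1_sq_defect M X\<bar> \<le> (\<bar>c0\<bar> + \<bar>c1\<bar> + \<bar>c2\<bar> + \<bar>c3\<bar>) * X^3" if "X \<ge> 1" for X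
    using abs_poly_le_pow[OF that, of "\<lambda>i. [c0, c1, c2, c3] ! i" 3] by simp
  then show ?thesis
    by blast
qed

section \<open>Bounded errors\<close>

lemma mean_outdeg1_error_Suc:
  fixes m n :: nat
  assumes "m \<ge> 2" and "n \<ge> 1"
  defines "M \<equiv> real m" and "X \<equiv> pa_scale m n"
  shows "(X + M) * (mean_outdeg1 m (Suc n) - outdeg1_approx M (X + M + 1))
    = X / (X + (M - 1)) * ((X - 1) * (mean_outdeg1 m n - outdeg1_approx M X))
      + (- ((M - 1) * M * (M + 1) / (2 * (3 * M + 1)))) / (X + (M - 1))"
proof -
  have y: "mean_outdeg1 m (Suc n) = (X - 1) * X / ((X + M - 1) * (X + M)) * mean_outdeg1 m n
      + M * X / ((X + M - 1) * (X + M)) * ((X + M) / (2 * M + 1))"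
    using mean_outdeg1_Suc[OF assms(1), of n] mean_white_eq[OF assms(1,2)] by (simp add: X_def M_def)
  have "X \<ge> M + 1" "M \<ge> 2"
    using pa_scale_ge[OF assms(2), of m] assms(1) by (simp_all add: X_def M_def)
  then have defect: "(M - 1) * M * (M + 1) / (2 * (3 * M + 1)) = outdeg1_defect M X"
    by (simp add: outdeg1_defect_eq)
  have "X + M - 1 > 0" "X + M > 0" "X + (M - 1) > 0" "2 * M + 1 > 0"
    using \<open>X \<ge> M + 1\<close> \<open>M \<ge> 2\<close> by auto
  then show ?thesis
    unfolding y defect outdeg1_defect_def by (simp add: divide_simps) (simp add: algebra_simps)
qed

lemma mean_outdeg1_error:
  assumes "m \<ge> 2"
  shows "\<exists>B. \<forall>n\<ge>1. \<bar>mean_outdeg1 m n - outdeg1_approx (real m) (pa_scale m n)\<bar> * (pa_scale m n - 1) \<le> B"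
proof -
  define M x where "M = real m" and "x n = pa_scale m n" for n
  define e where "e n = (x n - 1) * (mean_outdeg1 m n - outdeg1_approx M (x n))" for n
  define K where "K = (M - 1) * M * (M + 1) / (2 * (3 * M + 1))"
  have M: "M \<ge> 2"
    using assms by (simp add: M_def)
  have x: "x n \<ge> M + 1" if "n \<ge> 1" for n
    using pa_scale_ge[OF that, of m] by (simp add: x_def M_def)
  have rec: "e (Suc n) = x n / (x n + (M - 1)) * e n + (- K) / (x n + (M - 1))" if "n \<ge> 1" for n
    using mean_outdeg1_error_Suc[OF assms that]
    by (simp add: e_def K_def x_def M_def pa_scale_Suc add_ac)
  obtain B where B: "\<And>n. n \<ge> 1 \<Longrightarrow> \<bar>e n\<bar> \<le> B"
  proof (atomize_elim, rule bounded_of_contracting_recurrence[where c = "M - 1" and x = x and C = "\<bar>K\<bar>"])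
    fix n :: nat assume "n \<ge> 1"
    with x[OF this] M show "x n \<ge> 0 \<and> 0 \<le> x n / (x n + (M - 1)) \<and> x n / (x n + (M - 1)) \<le> x n / (x n + (M - 1))"
      by simp
    from x[OF \<open>n \<ge> 1\<close>] M show "\<bar>- K / (x n + (M - 1))\<bar> \<le> \<bar>K\<bar> / (x n + (M - 1))"
      by (simp add: abs_divide)
  qed (use M rec in auto)
  have "\<bar>mean_outdeg1 m n - outdeg1_approx M (x n)\<bar> * (x n - 1) = \<bar>e n\<bar>" if "n \<ge> 1" for n
    using x[OF that] M by (simp add: e_def abs_mult)
  with B show ?thesis
    by (auto simp: M_def x_def)
qed

lemma mean_white_outdeg1_error_Suc:
  fixes m n :: nat
  assumes "m \<ge> 2" and "n \<ge> 1"
  defines "M \<equiv> real m" and "X \<equiv> pa_scale m n"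
  shows "mean_white_outdeg1 m (Suc n) - white_outdeg1_approx M (X + M + 1)
    = (X - 2) * (X - 1) * X / ((X + M - 2) * (X + M - 1) * (X + M))
        * (mean_white_outdeg1 m n - white_outdeg1_approx M X)
      + ((mean_outdeg1 m (Suc n) - outdeg1_approx M (X + M + 1))
        - white_outdeg1_defect M X / ((X + M - 2) * (X + M - 1) * (X + M)))"
proof -
  have p: "mean_white_outdeg1 m (Suc n) =
      ((X - 2) * (X - 1) * X * mean_white_outdeg1 m n
        + M * (X - 1) * X * (white_sq_numer M X / ((2 * M + 1)^2 * (3 * M + 1) * (X - 1))
          - (X + M) / (2 * M + 1))) / ((X + M - 2) * (X + M - 1) * (X + M))
      + mean_outdeg1 m (Suc n)"
    using mean_white_outdeg1_Suc[OF assms(1,2)] mean_white_eq[OF assms(1,2)] mean_white_sq_eq[OF assms(1,2)]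
    by (simp add: X_def M_def)
  have "X \<ge> M + 1" "M \<ge> 2"
    using pa_scale_ge[OF assms(2), of m] assms(1) by (simp_all add: X_def M_def)
  then have "X - 1 > 0" "X + M - 2 > 0" "X + M - 1 > 0" "X + M > 0" "2 * M + 1 > 0" "3 * M + 1 > 0"
    by auto
  then show ?thesis
    unfolding p white_outdeg1_defect_def by (simp add: divide_simps) (simp add: algebra_simps)
qed

lemma mean_white_outdeg1_error:
  assumes "m \<ge> 2"
  shows "\<exists>B. \<forall>n\<ge>1. \<bar>mean_white_outdeg1 m n - white_outdeg1_approx (real m) (pa_scale m n)\<bar> \<le> B"
proof -
  define M x where "M = real m" and "x n = pa_scale m n" for n
  have M: "M \<ge> 2"
    using assms by (simp add: M_def)
  have x: "x n \<ge> M + 1" if "n \<ge> 1" for n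
    using pa_scale_ge[OF that, of m] by (simp add: x_def M_def)
  have xs: "x (Suc n) = x n + M + 1" for n
    by (simp add: x_def M_def pa_scale_Suc)
  obtain By where By: "\<And>n. n \<ge> 1 \<Longrightarrow> \<bar>mean_outdeg1 m n - outdeg1_approx M (x n)\<bar> * (x n - 1) \<le> By"
    using mean_outdeg1_error[OF assms] by (auto simp: M_def x_def)
  obtain C where C: "\<And>X. X \<ge> 1 \<Longrightarrow> \<bar>white_outdeg1_defect M X\<bar> \<le> C * X^2"
    using white_outdeg1_defect_bound M by fastforce
  define e \<rho> r where "e n = mean_white_outdeg1 m n - white_outdeg1_approx M (x n)"
    and "\<rho> n = (x n - 2) * (x n - 1) * x n / ((x n + M - 2) * (x n + M - 1) * (x n + M))"
    and "r n = (mean_outdeg1 m (Suc n) - outdeg1_approx M (x n + M + 1))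
      - white_outdeg1_defect M (x n) / ((x n + M - 2) * (x n + M - 1) * (x n + M))"
    for n
  have rec: "e (Suc n) = \<rho> n * e n + r n" if "n \<ge> 1" for n
    unfolding e_def \<rho>_def r_def xs by (rule mean_white_outdeg1_error_Suc[OF assms that, folded x_def M_def])
  obtain B where B: "\<And>n. n \<ge> 1 \<Longrightarrow> \<bar>e n\<bar> \<le> B"
  proof (atomize_elim, rule bounded_of_contracting_recurrence[where c = M and x = x and C = "By + C"])
    fix n :: nat assume "n \<ge> 1"
    have "0 \<le> (x n - 2) * (x n - 1)" "(x n - 2) * (x n - 1) \<le> (x n + M - 2) * (x n + M - 1)"
      using x[OF \<open>n \<ge> 1\<close>] M by (auto intro: mult_mono)
    then show "x n \<ge> 0 \<and> 0 \<le> \<rho> n \<and> \<rho> n \<le> x n / (x n + M)"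
      using mult_divide_le_ratio[of "(x n - 2) * (x n - 1)" "(x n + M - 2) * (x n + M - 1)" "x n" M]
        x[OF \<open>n \<ge> 1\<close>] M by (simp add: \<rho>_def)
    have "\<bar>mean_outdeg1 m (Suc n) - outdeg1_approx M (x n + M + 1)\<bar> \<le> By / (x n + M)"
      using By[of "Suc n"] x[OF \<open>n \<ge> 1\<close>] M by (simp add: xs divide_simps add_ac)
    moreover have "\<bar>white_outdeg1_defect M (x n) / ((x n + M - 2) * (x n + M - 1) * (x n + M))\<bar> \<le> C / (x n + M)"
      using x[OF \<open>n \<ge> 1\<close>] M C by (intro abs_divide_falling3_le) auto
    ultimately show "\<bar>r n\<bar> \<le> (By + C) / (x n + M)"
      unfolding r_def add_divide_distrib by linarith
  qed (use M rec in auto)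
  then show ?thesis
    by (auto simp: e_def M_def x_def)
qed

lemma abs_outdeg1_sq_remainder_le:
  fixes X M dp dy d Bp By C :: real
  assumes X: "X \<ge> 3" and M: "M \<ge> 2"
    and "\<bar>dp\<bar> \<le> Bp" and "\<bar>dy\<bar> \<le> By" and "\<bar>d\<bar> \<le> C * X^3"
  shows "\<bar>(4 * M * ((X - 2) * (X - 1) * X) * dp + 2 * M * ((X - 1) * X * (2 * (X - 2) + M - 1)) * dy - d)
      / (2 * ((X + M - 3) * (X + M - 2) * (X + M - 1) * (X + M)))\<bar>
    \<le> (4 * M * Bp + 2 * M * (M + 2) * By + C) / (X + M)"
proof (rule abs_divide_falling4_le[OF X M])
  have w1: "0 \<le> (X - 2) * (X - 1) * X" "(X - 2) * (X - 1) * X \<le> X^3"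
    using X by (auto simp: power3_eq_cube intro!: mult_mono)
  have "M \<le> M * X"
    using mult_left_mono[of 1 X M] X M by simp
  then have "2 * (X - 2) + M - 1 \<le> (M + 2) * X"
    using X by (simp add: algebra_simps)
  then have "(X - 1) * X * (2 * (X - 2) + M - 1) \<le> (X * X) * ((M + 2) * X)"
    using X M by (intro mult_mono) auto
  then have w2: "0 \<le> (X - 1) * X * (2 * (X - 2) + M - 1)" "(X - 1) * X * (2 * (X - 2) + M - 1) \<le> (M + 2) * X^3"
    using X M by (simp_all add: power3_eq_cube mult_ac)
  have "\<bar>4 * M * ((X - 2) * (X - 1) * X) * dp\<bar> = 4 * M * ((X - 2) * (X - 1) * X) * \<bar>dp\<bar>"
    using w1 M by (simp only: abs_mult[of "4 * M * ((X - 2) * (X - 1) * X)"] abs_of_nonneg) simp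
  also have "\<dots> \<le> 4 * M * X^3 * Bp"
    using w1 M X assms(3) by (intro mult_mono mult_left_mono) auto
  finally have "\<bar>4 * M * ((X - 2) * (X - 1) * X) * dp\<bar> \<le> 4 * M * X^3 * Bp" .
  moreover have "2 * M * ((X - 1) * X * (2 * (X - 2) + M - 1)) \<le> 2 * M * ((M + 2) * X^3)"
    using w2 M by (intro mult_left_mono) auto
  then have "2 * M * ((X - 1) * X * (2 * (X - 2) + M - 1)) * \<bar>dy\<bar> \<le> 2 * M * ((M + 2) * X^3) * By"
    by (rule mult_mono) (use M X assms(4) in auto)
  moreover have "\<bar>2 * M * ((X - 1) * X * (2 * (X - 2) + M - 1)) * dy\<bar>
      = 2 * M * ((X - 1) * X * (2 * (X - 2) + M - 1)) * \<bar>dy\<bar>"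
    using w2 M by (simp only: abs_mult[of "2 * M * ((X - 1) * X * (2 * (X - 2) + M - 1))"] abs_of_nonneg) simp
  ultimately show "\<bar>4 * M * ((X - 2) * (X - 1) * X) * dp + 2 * M * ((X - 1) * X * (2 * (X - 2) + M - 1)) * dy - d\<bar>
      \<le> (4 * M * Bp + 2 * M * (M + 2) * By + C) * X^3"
    using assms(5) by (simp add: algebra_simps) linarith
qed

lemma mean_outdeg1_sq_error_Suc:
  fixes m n :: nat
  assumes "m \<ge> 2" and "n \<ge> 1"
  defines "M \<equiv> real m" and "X \<equiv> pa_scale m n"
  shows "mean_outdeg1_sq m (Suc n) - outdeg1_sq_approx M (X + M + 1)
    = 2 * ((X - 3) * (X - 2) * (X - 1)) * X / (2 * ((X + M - 3) * (X + M - 2) * (X + M - 1)) * (X + M))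
        * (mean_outdeg1_sq m n - outdeg1_sq_approx M X)
      + (4 * M * ((X - 2) * (X - 1) * X) * (mean_white_outdeg1 m n - white_outdeg1_approx M X)
        + 2 * M * ((X - 1) * X * (2 * (X - 2) + M - 1)) * (mean_outdeg1 m n - outdeg1_approx M X)
        - outdeg1_sq_defect M X) / (2 * ((X + M - 3) * (X + M - 2) * (X + M - 1) * (X + M)))"
proof -
  have q: "mean_outdeg1_sq m (Suc n) =
      (2 * (X - 3) * (X - 2) * (X - 1) * X * mean_outdeg1_sq m n
       + 4 * M * (X - 2) * (X - 1) * X * mean_white_outdeg1 m n
       + 2 * M * (M - 1) * (X - 1) * X * (white_sq_numer M X / ((2 * M + 1)^2 * (3 * M + 1) * (X - 1)))
       + M * X * (2 * (X - 2) * (X - 1) + (2 * X - 5) * (M - 1) + (M - 1) * (2 * M - 1)) * ((X + M) / (2 * M + 1))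
       + 2 * M * (X - 1) * X * (2 * (X - 2) + M - 1) * mean_outdeg1 m n)
      / (2 * ((X + M - 3) * (X + M - 2) * (X + M - 1) * (X + M)))"
    using mean_outdeg1_sq_Suc[OF assms(1,2)] mean_white_eq[OF assms(1,2)] mean_white_sq_eq[OF assms(1,2)]
    by (simp add: X_def M_def)
  have "X \<ge> M + 1" "M \<ge> 2"
    using pa_scale_ge[OF assms(2), of m] assms(1) by (simp_all add: X_def M_def)
  then have "X - 1 > 0" "X + M - 3 > 0" "X + M - 2 > 0" "X + M - 1 > 0" "X + M > 0" "2 * M + 1 > 0" "3 * M + 1 > 0"
    by auto
  then show ?thesis
    unfolding q outdeg1_sq_defect_def by (simp add: divide_simps) (simp add: algebra_simps)
qed

lemma mean_outdeg1_sq_error: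
  assumes "m \<ge> 2"
  shows "\<exists>B. \<forall>n\<ge>1. \<bar>mean_outdeg1_sq m n - outdeg1_sq_approx (real m) (pa_scale m n)\<bar> \<le> B"
proof -
  define M x where "M = real m" and "x n = pa_scale m n" for n
  have M: "M \<ge> 2"
    using assms by (simp add: M_def)
  have x: "x n \<ge> M + 1" if "n \<ge> 1" for n
    using pa_scale_ge[OF that, of m] by (simp add: x_def M_def)
  obtain By where By: "\<And>n. n \<ge> 1 \<Longrightarrow> \<bar>mean_outdeg1 m n - outdeg1_approx M (x n)\<bar> * (x n - 1) \<le> By"
    using mean_outdeg1_error[OF assms] by (auto simp: M_def x_def)
  have ey: "\<bar>mean_outdeg1 m n - outdeg1_approx M (x n)\<bar> \<le> By" if "n \<ge> 1" for n
    using By[OF that] mult_left_mono[of 1 "x n - 1" "\<bar>mean_outdeg1 m n - outdeg1_approx M (x n)\<bar>"]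
      x[OF that] M by simp
  obtain Bp where ep: "\<And>n. n \<ge> 1 \<Longrightarrow> \<bar>mean_white_outdeg1 m n - white_outdeg1_approx M (x n)\<bar> \<le> Bp"
    using mean_white_outdeg1_error[OF assms] by (auto simp: M_def x_def)
  obtain C where C: "\<And>X. X \<ge> 1 \<Longrightarrow> \<bar>outdeg1_sq_defect M X\<bar> \<le> C * X^3"
    using outdeg1_sq_defect_bound M by fastforce
  define e \<rho> r where "e n = mean_outdeg1_sq m n - outdeg1_sq_approx M (x n)"
    and "\<rho> n = 2 * ((x n - 3) * (x n - 2) * (x n - 1)) * x n
      / (2 * ((x n + M - 3) * (x n + M - 2) * (x n + M - 1)) * (x n + M))"
    and "r n = (4 * M * ((x n - 2) * (x n - 1) * x n) * (mean_white_outdeg1 m n - white_outdeg1_approx M (x n))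
      + 2 * M * ((x n - 1) * x n * (2 * (x n - 2) + M - 1)) * (mean_outdeg1 m n - outdeg1_approx M (x n))
      - outdeg1_sq_defect M (x n)) / (2 * ((x n + M - 3) * (x n + M - 2) * (x n + M - 1) * (x n + M)))"
    for n
  have xs: "x (Suc n) = x n + M + 1" for n
    by (simp add: x_def M_def pa_scale_Suc)
  have rec: "e (Suc n) = \<rho> n * e n + r n" if "n \<ge> 1" for n
    unfolding e_def \<rho>_def r_def xs by (rule mean_outdeg1_sq_error_Suc[OF assms that, folded x_def M_def])
  obtain B where B: "\<And>n. n \<ge> 1 \<Longrightarrow> \<bar>e n\<bar> \<le> B"
  proof (atomize_elim, rule bounded_of_contracting_recurrence
      [where c = M and x = x and C = "4 * M * Bp + 2 * M * (M + 2) * By + C"])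
    fix n :: nat assume n: "n \<ge> 1"
    have X: "x n \<ge> 3"
      using x[OF n] M by simp
    have "0 \<le> (x n - 3) * (x n - 2) * (x n - 1)"
      "(x n - 3) * (x n - 2) * (x n - 1) \<le> (x n + M - 3) * (x n + M - 2) * (x n + M - 1)"
      using X M by (auto intro!: mult_mono)
    then show "x n \<ge> 0 \<and> 0 \<le> \<rho> n \<and> \<rho> n \<le> x n / (x n + M)"
      using mult_divide_le_ratio[of "2 * ((x n - 3) * (x n - 2) * (x n - 1))"
          "2 * ((x n + M - 3) * (x n + M - 2) * (x n + M - 1))" "x n" M] X M
      by (simp add: \<rho>_def)
    show "\<bar>r n\<bar> \<le> (4 * M * Bp + 2 * M * (M + 2) * By + C) / (x n + M)"
      unfolding r_def using X M ep[OF n] ey[OF n] C by (intro abs_outdeg1_sq_remainder_le) auto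
  qed (use M rec in auto)
  then show ?thesis
    by (auto simp: e_def M_def x_def)
qed

lemma white_sq_numer_scaled:
  fixes m n :: nat
  assumes "m \<ge> 2" and "n \<ge> 1"
  shows "white_sq_numer (real m) (pa_scale m n) / ((2 * real m + 1)^2 * (3 * real m + 1) * (pa_scale m n - 1)) =
    (real m + 1)^3 * real n^3 / ((real m * real n + real n - 1) * (2 * real m + 1)^2)
    + ((8 * real m^2 - real m - 1) * (real m + 1)^2 * real n^2
       + real m * (real m + 1) * (3 * real m^2 - 6 * real m - 1) * real n
       - real m * (2 * real m^3 + 6 * real m^2 + 3 * real m + 1))
      / ((real m * real n + real n - 1) * (2 * real m + 1)^2 * (3 * real m + 1))"
proof -
  have "real m * real n + real n - 1 > 0"
    using pa_scale_ge[OF assms(2), of m] assms(1) by (simp add: pa_scale_def algebra_simps)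
  then show ?thesis
    by (simp add: pa_scale_def white_sq_numer_def divide_simps)
      (simp add: algebra_simps power2_eq_square power3_eq_cube)
qed

lemma outdeg1_sq_approx_scaled:
  fixes m n :: nat
  shows "4 * outdeg1_sq_approx (real m) (pa_scale m n) =
    4 * real m^2 * (real m + 1)^2 / ((3 * real m + 1)^2 * (2 * real m + 1)^2) * real n^2
    + (96 * real m^4 + 138 * real m^3 + 83 * real m^2 + 18 * real m + 1)
      / ((5 * real m + 1) * (4 * real m + 1) * (3 * real m + 1)^2)
      * (4 * (real m + 1) * real m / (2 * real m + 1)^2) * real n"
  by (simp add: outdeg1_sq_approx_def pa_scale_def field_simps power2_eq_square)

lemma blue_ext_sq: "real (blue_ext ds)^2 = 4 * real (outdeg1 ds)^2"
  by (simp add: blue_ext_def outdeg1_def power2_eq_square)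

theorem proposition3:
  fixes m :: nat
  assumes "m \<ge> 2"
  shows "(\<forall>n\<ge>1. measure_pmf.expectation (pa_circuit m n) (\<lambda>ds. (real (white_ext ds))^2) =
           (real m + 1)^3 * real n^3 / ((real m * real n + real n - 1) * (2 * real m + 1)^2)
         + ((8 * real m^2 - real m - 1) * (real m + 1)^2 * real n^2
            + real m * (real m + 1) * (3 * real m^2 - 6 * real m - 1) * real n
            - real m * (2 * real m^3 + 6 * real m^2 + 3 * real m + 1))
           / ((real m * real n + real n - 1) * (2 * real m + 1)^2 * (3 * real m + 1)))
       \<and> ((\<lambda>n. measure_pmf.expectation (pa_circuit m n) (\<lambda>ds. (real (blue_ext ds))^2)
           - (4 * real m^2 * (real m + 1)^2 / ((3 * real m + 1)^2 * (2 * real m + 1)^2) * real n^2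
              + (96 * real m^4 + 138 * real m^3 + 83 * real m^2 + 18 * real m + 1)
                / ((5 * real m + 1) * (4 * real m + 1) * (3 * real m + 1)^2)
                * (4 * (real m + 1) * real m / (2 * real m + 1)^2) * real n))
         \<in> O(\<lambda>_. 1))"
proof (intro conjI allI impI, goal_cases)
  case (1 n)
  then show ?case
    using mean_white_sq_eq[OF assms] white_sq_numer_scaled[OF assms] by (simp add: mean_white_sq_def)
next
  case 2
  obtain B where B: "\<And>n. n \<ge> 1 \<Longrightarrow> \<bar>mean_outdeg1_sq m n - outdeg1_sq_approx (real m) (pa_scale m n)\<bar> \<le> B"
    using mean_outdeg1_sq_error[OF assms] by blast
  have blue: "measure_pmf.expectation (pa_circuit m n) (\<lambda>ds. (real (blue_ext ds))^2) = 4 * mean_outdeg1_sq m n"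
    for n
    by (simp add: blue_ext_sq mean_outdeg1_sq_def)
  have "norm (4 * mean_outdeg1_sq m n - 4 * outdeg1_sq_approx (real m) (pa_scale m n)) \<le> 4 * B * norm (1 :: real)"
    if "n \<ge> 1" for n
  proof -
    have "4 * mean_outdeg1_sq m n - 4 * outdeg1_sq_approx (real m) (pa_scale m n)
        = 4 * (mean_outdeg1_sq m n - outdeg1_sq_approx (real m) (pa_scale m n))"
      by (simp only: right_diff_distrib)
    then show ?thesis
      using B[OF that] by simp
  qed
  then show ?case
    unfolding blue outdeg1_sq_approx_scaled[symmetric]
    by (intro bigoI[where c = "4 * B"]) (auto simp: eventually_at_top_linorder)
qed

end
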